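(* Let $n_1,n_2$ be positive integers. Fix $L\in\mathbb{R}^{n_1\times n_2}$ of rank $r$, a basis matrix $G\in\mathbb{R}^{n_1\times r_G}$ with $L_{\mathrm{new}}:=(I-GG^\top)L$ of rank less than $r$, and a matrix $S_0\in\mathbb{R}^{n_1\times n_2}$ with all entries nonzero. For a random subset $\Omega$ of $\{1,\dots,n_1\}\times\{1,\dots,n_2\}$, let $S=\mathcal P_\Omega S_0$ and $M=L+S$, and let "Success" be the event that $(L_{\mathrm{new}},S,L^\top G)$ is the unique solution of $$\min_{\tilde L_{\mathrm{new}},\tilde S,\tilde X}\|\tilde L_{\mathrm{new}}\|_*+\lambda\|\tilde S\|_1\ \text{ s.t. }\ \tilde L_{\mathrm{new}}+G\tilde X^\top+\tilde S=M.$$ Let $m_0$ be an integer and $\epsilon_0>0$, and set $\rho_0=\frac{m_0}{n_1n_2}+\epsilon_0\in[0,1]$. Then $$\mathbb{P}_{\mathrm{Unif}(m_0)}(\mathrm{Success})\ge\mathbb{P}_{\mathrm{Ber}(\rho_0)}(\mathrm{Success})-e^{-2n_1n_2\epsilon_0^2}.$$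
   Context: $\mathcal P_\Omega S_0$ keeps the entries of $S_0$ with index in $\Omega$ and sets the others to zero. $\mathbb{P}_{\mathrm{Unif}(m)}$ is probability when $\Omega$ is uniformly distributed among all index subsets of size $m$; $\mathbb{P}_{\mathrm{Ber}(\rho)}$ is probability when each index $(i,j)$ belongs to $\Omega$ independently with probability $\rho$. A basis matrix satisfies $G^\top G=I$. $\lambda>0$ is a fixed parameter; the variables range over $\tilde L_{\mathrm{new}},\tilde S\in\mathbb{R}^{n_1\times n_2}$, $\tilde X\in\mathbb{R}^{n_2\times r_G}$. *)

theory Defs
  imports "Jordan_Normal_Form.DL_Rank" "Jordan_Normal_Form.Char_Poly"
          "HOL-Probability.Product_PMF"
begin

text \<open>Matrices are Jordan_Normal_Form matrices with explicit dimensions; indices are 0-based,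
so the index set is {0..<n1} x {0..<n2}.\<close>

definition idx_set :: "nat \<Rightarrow> nat \<Rightarrow> (nat \<times> nat) set" where
  "idx_set n1 n2 = {0..<n1} \<times> {0..<n2}"

definition mrank :: "nat \<Rightarrow> real mat \<Rightarrow> nat" where
  "mrank n A = vec_space.rank n A"

definition singular_values :: "real mat \<Rightarrow> real multiset" where
  "singular_values A = image_mset sqrt (proots (char_poly (transpose_mat A * A)))"

definition nuc_norm :: "real mat \<Rightarrow> real" where
  "nuc_norm A = sum_mset (singular_values A)"

definition l1_norm :: "real mat \<Rightarrow> real" where
  "l1_norm A = (\<Sum>i<dim_row A. \<Sum>j<dim_col A. \<bar>A $$ (i,j)\<bar>)"

definition proj_Omega :: "(nat \<times> nat) set \<Rightarrow> real mat \<Rightarrow> real mat" where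
  "proj_Omega \<Omega> S0 = Matrix.mat (dim_row S0) (dim_col S0)
      (\<lambda>(i,j). if (i,j) \<in> \<Omega> then S0 $$ (i,j) else 0)"

definition feasible :: "nat \<Rightarrow> nat \<Rightarrow> nat \<Rightarrow> real mat \<Rightarrow> real mat \<Rightarrow>
    (real mat \<times> real mat \<times> real mat) set" where
  "feasible n1 n2 rG G M = {(Lt, S, X). Lt \<in> carrier_mat n1 n2 \<and> S \<in> carrier_mat n1 n2 \<and>
      X \<in> carrier_mat n2 rG \<and> Lt + G * transpose_mat X + S = M}"

definition objective :: "real \<Rightarrow> real mat \<times> real mat \<times> real mat \<Rightarrow> real" where
  "objective lam t = (case t of (Lt, S, X) \<Rightarrow> nuc_norm Lt + lam * l1_norm S)"

definition solutions :: "nat \<Rightarrow> nat \<Rightarrow> nat \<Rightarrow> real \<Rightarrow> real mat \<Rightarrow> real mat \<Rightarrow>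
    (real mat \<times> real mat \<times> real mat) set" where
  "solutions n1 n2 rG lam G M = {t \<in> feasible n1 n2 rG G M.
      \<forall>t' \<in> feasible n1 n2 rG G M. objective lam t \<le> objective lam t'}"

definition Success :: "nat \<Rightarrow> nat \<Rightarrow> nat \<Rightarrow> real \<Rightarrow> real mat \<Rightarrow> real mat \<Rightarrow> real mat \<Rightarrow>
    (nat \<times> nat) set \<Rightarrow> bool" where
  "Success n1 n2 rG lam L G S0 \<Omega> =
     (let Lnew = (1\<^sub>m n1 - G * transpose_mat G) * L;
          S = proj_Omega \<Omega> S0;
          M = L + S
      in solutions n1 n2 rG lam G M = {(Lnew, S, transpose_mat L * G)})"

definition unif_model :: "nat \<Rightarrow> nat \<Rightarrow> nat \<Rightarrow> (nat \<times> nat) set pmf" where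
  "unif_model n1 n2 m = pmf_of_set {\<Omega>. \<Omega> \<subseteq> idx_set n1 n2 \<and> card \<Omega> = m}"

definition ber_model :: "nat \<Rightarrow> nat \<Rightarrow> real \<Rightarrow> (nat \<times> nat) set pmf" where
  "ber_model n1 n2 \<rho> = map_pmf (\<lambda>f. {x \<in> idx_set n1 n2. f x})
      (Pi_pmf (idx_set n1 n2) False (\<lambda>_. bernoulli_pmf \<rho>))"

end

theory Submission
  imports Defs "HOL-Probability.Hoeffding"
begin

text \<open>Success is a decreasing event in \<open>\<Omega>\<close>: deleting a corrupted entry from an instance
  that is solved exactly leaves one that is solved exactly, since the corresponding part of
  \<open>S\<close> can be moved back into the data at an \<open>l1\<close>-cost the true solution also pays. For a
  decreasing event the probability under \<open>Unif(m)\<close> is non-increasing in \<open>m\<close> (a double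
  counting argument), and \<open>Ber(\<rho>)\<close> conditioned on \<open>|\<Omega>| = k\<close> is \<open>Unif(k)\<close>. Hence
  \<open>P_Ber(Success) \<le> P_Unif(m0)(Success) + P(Bin(n1 n2, \<rho>0) \<le> m0)\<close>, and Hoeffding bounds the
  binomial tail by \<open>exp (-2 n1 n2 \<epsilon>0\<^sup>2)\<close>.\<close>

lemma l1_norm_carrier:
  "A \<in> carrier_mat n1 n2 \<Longrightarrow> l1_norm A = (\<Sum>i<n1. \<Sum>j<n2. \<bar>A $$ (i,j)\<bar>)"
  unfolding l1_norm_def by auto

lemma l1_norm_add_le:
  assumes "A \<in> carrier_mat n1 n2" "B \<in> carrier_mat n1 n2"
  shows "l1_norm (A + B) \<le> l1_norm A + l1_norm B"
proof -
  have "l1_norm (A + B) = (\<Sum>i<n1. \<Sum>j<n2. \<bar>A $$ (i,j) + B $$ (i,j)\<bar>)"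
    using assms by (subst l1_norm_carrier[of _ n1 n2]) auto
  also have "\<dots> \<le> (\<Sum>i<n1. \<Sum>j<n2. \<bar>A $$ (i,j)\<bar> + \<bar>B $$ (i,j)\<bar>)"
    by (intro sum_mono abs_triangle_ineq)
  also have "\<dots> = l1_norm A + l1_norm B"
    using assms by (simp add: l1_norm_carrier[of _ n1 n2] sum.distrib)
  finally show ?thesis .
qed

lemma proj_Omega_carrier: "S0 \<in> carrier_mat n1 n2 \<Longrightarrow> proj_Omega \<Omega> S0 \<in> carrier_mat n1 n2"
  unfolding proj_Omega_def by auto

lemma proj_Omega_Un:
  assumes "S0 \<in> carrier_mat n1 n2" "A \<inter> B = {}"
  shows "proj_Omega (A \<union> B) S0 = proj_Omega A S0 + proj_Omega B S0"
  using assms by (intro eq_matI) (auto simp: proj_Omega_def)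

lemma l1_norm_proj_Omega_Un:
  assumes S0: "S0 \<in> carrier_mat n1 n2" and disj: "A \<inter> B = {}"
  shows "l1_norm (proj_Omega (A \<union> B) S0) = l1_norm (proj_Omega A S0) + l1_norm (proj_Omega B S0)"
proof -
  have "\<bar>proj_Omega (A \<union> B) S0 $$ (i,j)\<bar>
      = \<bar>proj_Omega A S0 $$ (i,j)\<bar> + \<bar>proj_Omega B S0 $$ (i,j)\<bar>"
    if "i < n1" "j < n2" for i j
    using that S0 disj by (auto simp: proj_Omega_def)
  then show ?thesis
    using S0 by (simp add: l1_norm_carrier[of _ n1 n2] proj_Omega_carrier sum.distrib)
qed

section \<open>Unique optimality survives removing corruptions\<close>

lemma add_mat_right_cancel:
  fixes A B D :: "'a :: cancel_semigroup_add mat"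
  assumes "A \<in> carrier_mat n m" "B \<in> carrier_mat n m" "D \<in> carrier_mat n m"
  shows "A + D = B + D \<longleftrightarrow> A = B"
proof
  assume eq: "A + D = B + D"
  have "A $$ (i,j) = B $$ (i,j)" if "i < n" "j < m" for i j
    using arg_cong[OF eq, of "\<lambda>C. C $$ (i,j)"] that assms by simp
  then show "A = B" using assms by (intro eq_matI) auto
qed simp

lemma feasible_add_sparse_iff:
  assumes G: "G \<in> carrier_mat n1 rG" and M: "M \<in> carrier_mat n1 n2"
    and D: "D \<in> carrier_mat n1 n2" and St: "St \<in> carrier_mat n1 n2"
  shows "(Lt, St + D, X) \<in> feasible n1 n2 rG G (M + D) \<longleftrightarrow> (Lt, St, X) \<in> feasible n1 n2 rG G M"
proof -
  have "Lt + G * transpose_mat X + (St + D) = M + D \<longleftrightarrow> Lt + G * transpose_mat X + St = M"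
    if Lt: "Lt \<in> carrier_mat n1 n2" and X: "X \<in> carrier_mat n2 rG"
  proof -
    have P: "G * transpose_mat X \<in> carrier_mat n1 n2" using X G by simp
    then have "Lt + G * transpose_mat X + (St + D) = (Lt + G * transpose_mat X + St) + D"
      using Lt St D by (simp add: assoc_add_mat[of _ n1 n2])
    then show ?thesis
      using add_mat_right_cancel[of "Lt + G * transpose_mat X + St" n1 n2 M D] Lt P St D M by simp
  qed
  moreover have "St + D \<in> carrier_mat n1 n2" using St D by simp
  ultimately show ?thesis using St unfolding feasible_def by blast
qed

lemma objective_add_sparse_le:
  assumes "lam \<ge> 0" "St \<in> carrier_mat n1 n2" "D \<in> carrier_mat n1 n2"
  shows "objective lam (Lt, St + D, X) \<le> objective lam (Lt, St, X) + lam * l1_norm D"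
  using mult_left_mono[OF l1_norm_add_le[OF assms(2,3)] assms(1)]
  by (simp add: objective_def algebra_simps)

text \<open>Every competitor for \<open>M\<close>, shifted by \<open>D\<close>, competes for \<open>M + D\<close> at an extra cost of at
  most \<open>lam * l1_norm D\<close>, which by the hypothesis \<open>l1\<close> is exactly the extra cost of the
  solution itself.\<close>

lemma solutions_remove_sparse:
  assumes lam: "lam \<ge> 0" and G: "G \<in> carrier_mat n1 rG" and M: "M \<in> carrier_mat n1 n2"
    and D: "D \<in> carrier_mat n1 n2" and S: "S \<in> carrier_mat n1 n2"
    and l1: "l1_norm (S + D) = l1_norm S + l1_norm D"
    and sol: "solutions n1 n2 rG lam G (M + D) = {(Lt0, S + D, X0)}"
  shows "solutions n1 n2 rG lam G M = {(Lt0, S, X0)}"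
proof -
  let ?F = "feasible n1 n2 rG G" and ?obj = "objective lam"
  have feasD: "(Lt0, S + D, X0) \<in> ?F (M + D)"
    and optD: "\<And>t. t \<in> ?F (M + D) \<Longrightarrow> ?obj (Lt0, S + D, X0) \<le> ?obj t"
    using sol unfolding solutions_def by blast+
  have feas0: "(Lt0, S, X0) \<in> ?F M"
    using feasD feasible_add_sparse_iff[OF G M D S] by simp
  have obj0: "?obj (Lt0, S + D, X0) = ?obj (Lt0, S, X0) + lam * l1_norm D"
    by (simp add: objective_def l1 algebra_simps)
  have St: "St \<in> carrier_mat n1 n2" and shift: "(Lt, St + D, X) \<in> ?F (M + D)"
    if "(Lt, St, X) \<in> ?F M" for Lt St X
  proof -
    show St: "St \<in> carrier_mat n1 n2" using that by (simp add: feasible_def)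
    show "(Lt, St + D, X) \<in> ?F (M + D)" using that feasible_add_sparse_iff[OF G M D St] by simp
  qed
  have cost: "?obj (Lt, St + D, X) \<le> ?obj (Lt, St, X) + lam * l1_norm D"
    if "(Lt, St, X) \<in> ?F M" for Lt St X
    using objective_add_sparse_le[OF lam St[OF that] D] .
  have opt0: "?obj (Lt0, S, X0) \<le> ?obj t" if t: "t \<in> ?F M" for t
  proof -
    obtain Lt St X where tt: "t = (Lt, St, X)" by (cases t)
    show ?thesis using optD[OF shift] cost obj0 t unfolding tt by fastforce
  qed
  have unique: "t = (Lt0, S, X0)" if t: "t \<in> ?F M" "?obj t \<le> ?obj (Lt0, S, X0)" for t
  proof -
    obtain Lt St X where tt: "t = (Lt, St, X)" by (cases t)
    have ft: "(Lt, St, X) \<in> ?F M" using t(1) unfolding tt .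
    have "?obj (Lt, St + D, X) \<le> ?obj (Lt0, S + D, X0)"
      using cost[OF ft] obj0 t(2) unfolding tt by linarith
    then have "(Lt, St + D, X) \<in> solutions n1 n2 rG lam G (M + D)"
      using shift[OF ft] optD order_trans unfolding solutions_def by fastforce
    then have "Lt = Lt0" "St + D = S + D" "X = X0" using sol by auto
    then show ?thesis
      using add_mat_right_cancel[OF St[OF ft] S D] unfolding tt by simp
  qed
  show ?thesis
    using feas0 opt0 unique unfolding solutions_def by blast
qed

lemma Success_antimono:
  assumes L: "L \<in> carrier_mat n1 n2" and G: "G \<in> carrier_mat n1 rG"
    and S0: "S0 \<in> carrier_mat n1 n2" and lam: "lam \<ge> 0"
    and succ: "Success n1 n2 rG lam L G S0 \<Omega>" and sub: "\<Omega>' \<subseteq> \<Omega>"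
  shows "Success n1 n2 rG lam L G S0 \<Omega>'"
proof -
  let ?S = "proj_Omega \<Omega>' S0" and ?D = "proj_Omega (\<Omega> - \<Omega>') S0"
  have split: "\<Omega>' \<union> (\<Omega> - \<Omega>') = \<Omega>" "\<Omega>' \<inter> (\<Omega> - \<Omega>') = {}" using sub by auto
  have carr: "?S \<in> carrier_mat n1 n2" "?D \<in> carrier_mat n1 n2"
    using S0 by (simp_all add: proj_Omega_carrier)
  have "proj_Omega \<Omega> S0 = ?S + ?D"
    using proj_Omega_Un[OF S0 split(2)] split(1) by simp
  then have "L + proj_Omega \<Omega> S0 = (L + ?S) + ?D"
    using L carr by (simp add: assoc_add_mat)
  moreover have "l1_norm (?S + ?D) = l1_norm ?S + l1_norm ?D"
    using l1_norm_proj_Omega_Un[OF S0 split(2)] proj_Omega_Un[OF S0 split(2)] split(1) by simp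
  ultimately show ?thesis
    using succ solutions_remove_sparse[OF lam G _ carr(2) carr(1), of "L + ?S"] L carr
      \<open>proj_Omega \<Omega> S0 = ?S + ?D\<close>
    by (simp add: Success_def Let_def)
qed


section \<open>Down-closed events under the uniform and the Bernoulli model\<close>

definition subsets_of_card :: "'a set \<Rightarrow> nat \<Rightarrow> 'a set set" where
  "subsets_of_card I k = {T. T \<subseteq> I \<and> card T = k}"

definition random_subset :: "'a set \<Rightarrow> real \<Rightarrow> 'a set pmf" where
  "random_subset I p = map_pmf (\<lambda>f. {x \<in> I. f x}) (Pi_pmf I False (\<lambda>_. bernoulli_pmf p))"

definition down_closed :: "('a set \<Rightarrow> bool) \<Rightarrow> bool" where
  "down_closed P \<longleftrightarrow> (\<forall>T T'. P T \<longrightarrow> T' \<subseteq> T \<longrightarrow> P T')"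

lemma finite_subsets_of_card: "finite I \<Longrightarrow> finite (subsets_of_card I k)"
  unfolding subsets_of_card_def by (auto intro: finite_subset[of _ "Pow I"])

lemma prob_pmf_of_subsets_of_card:
  assumes I: "finite I" and k: "k \<le> card I"
  shows "measure_pmf.prob (pmf_of_set (subsets_of_card I k)) {T. P T}
       = card {T \<in> subsets_of_card I k. P T} / (card I choose k)"
proof -
  let ?S = "subsets_of_card I k"
  have "?S \<noteq> {}"
    using obtain_subset_with_card_n[OF k] by (auto simp: subsets_of_card_def)
  then have "measure_pmf.prob (pmf_of_set ?S) {T. P T} = card (?S \<inter> {T. P T}) / card ?S"
    using finite_subsets_of_card[OF I] by (rule measure_pmf_of_set)
  moreover have "?S \<inter> {T. P T} = {T \<in> ?S. P T}" by auto
  ultimately show ?thesis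
    using n_subsets[OF I] by (simp add: subsets_of_card_def)
qed

text \<open>Double counting of the pairs \<open>(T, x)\<close> with \<open>x \<in> T\<close>: removing \<open>x\<close> maps them injectively
  to pairs \<open>(T', x)\<close> with \<open>|T'| = k\<close> and \<open>x \<notin> T'\<close>.\<close>

lemma card_down_closed_subsets_Suc_le:
  assumes I: "finite I" and down: "down_closed P"
  shows "card {T \<in> subsets_of_card I (Suc k). P T} * Suc k
       \<le> card {T \<in> subsets_of_card I k. P T} * (card I - k)"
proof -
  define A1 where "A1 = {T \<in> subsets_of_card I (Suc k). P T}"
  define A0 where "A0 = {T \<in> subsets_of_card I k. P T}"
  have fin: "finite A1" "finite A0"
    using finite_subsets_of_card[OF I] by (auto simp: A1_def A0_def)
  have "card (Sigma A1 (\<lambda>T. T)) = card A1 * Suc k"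
    using fin I by (subst card_SigmaI)
      (auto simp: A1_def subsets_of_card_def intro: finite_subset)
  moreover have "card (Sigma A0 (\<lambda>T. I - T)) = (\<Sum>T\<in>A0. card (I - T))"
    using fin I by (intro card_SigmaI) auto
  moreover have "\<dots> = (\<Sum>T\<in>A0. card I - k)"
    using I by (intro sum.cong refl)
      (auto simp: A0_def subsets_of_card_def card_Diff_subset finite_subset)
  moreover have "card (Sigma A1 (\<lambda>T. T)) \<le> card (Sigma A0 (\<lambda>T. I - T))"
  proof (rule card_inj_on_le[where f = "\<lambda>(T, x). (T - {x}, x)"])
    show "inj_on (\<lambda>(T, x). (T - {x}, x)) (Sigma A1 (\<lambda>T. T))"
      by (auto simp: inj_on_def)
    show "(\<lambda>(T, x). (T - {x}, x)) ` Sigma A1 (\<lambda>T. T) \<subseteq> Sigma A0 (\<lambda>T. I - T)"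
    proof (rule image_subsetI)
      fix p assume "p \<in> Sigma A1 (\<lambda>T. T)"
      then obtain T x where p: "p = (T, x)" "T \<in> A1" "x \<in> T" by blast
      then have T: "T \<subseteq> I" "card T = Suc k" "P T" "finite T"
        using I by (auto simp: A1_def subsets_of_card_def intro: finite_subset)
      then show "(case p of (T, x) \<Rightarrow> (T - {x}, x)) \<in> Sigma A0 (\<lambda>T. I - T)"
        using p down unfolding down_closed_def by (auto simp: A0_def subsets_of_card_def)
    qed
    show "finite (Sigma A0 (\<lambda>T. I - T))" using fin I by auto
  qed
  ultimately show ?thesis by (simp add: A1_def A0_def)
qed

lemma prob_down_closed_Suc_le:
  assumes I: "finite I" and down: "down_closed P" and k: "k < card I"
  shows "measure_pmf.prob (pmf_of_set (subsets_of_card I (Suc k))) {T. P T}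
       \<le> measure_pmf.prob (pmf_of_set (subsets_of_card I k)) {T. P T}"
proof -
  define N where "N = card I"
  define a0 where "a0 = real (card {T \<in> subsets_of_card I k. P T})"
  define a1 where "a1 = real (card {T \<in> subsets_of_card I (Suc k). P T})"
  define c0 where "c0 = real (N choose k)"
  define c1 where "c1 = real (N choose Suc k)"
  have pos: "c0 > 0" "c1 > 0" "real (N - k) > 0" using k by (simp_all add: c0_def c1_def N_def)
  have "Suc k * (N choose Suc k) = (N - k) * (N choose k)"
    by (metis binomial_absorption binomial_absorb_comp)
  then have "real (Suc k * (N choose Suc k)) = real ((N - k) * (N choose k))" by (rule arg_cong)
  then have absorb: "real (Suc k) * c1 = c0 * real (N - k)"
    unfolding c0_def c1_def by (simp only: of_nat_mult mult.commute)
  have count: "a1 * real (Suc k) \<le> a0 * real (N - k)"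
    using card_down_closed_subsets_Suc_le[OF I down, where k = k]
    unfolding a0_def a1_def N_def by (simp only: of_nat_mult[symmetric] of_nat_le_iff)
  have "a1 * c0 * real (N - k) = a1 * real (Suc k) * c1"
    using absorb by (simp only: mult.assoc)
  also have "\<dots> \<le> a0 * real (N - k) * c1"
    using mult_right_mono[OF count] pos by simp
  finally have "a1 * c0 \<le> a0 * c1" using pos(3) by (simp add: mult_ac)
  then have "a1 / c1 \<le> a0 / c0" using pos by (simp add: divide_simps mult.commute)
  then show ?thesis
    using prob_pmf_of_subsets_of_card[OF I, of k] prob_pmf_of_subsets_of_card[OF I, of "Suc k"] k
    unfolding a0_def a1_def c0_def c1_def N_def by simp
qed

lemma prob_down_closed_antimono:
  assumes I: "finite I" and down: "down_closed P"
    and "m \<le> k" "k \<le> card I"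
  shows "measure_pmf.prob (pmf_of_set (subsets_of_card I k)) {T. P T}
       \<le> measure_pmf.prob (pmf_of_set (subsets_of_card I m)) {T. P T}"
  using assms(3,4)
proof (induction k rule: dec_induct)
  case (step k)
  then show ?case using prob_down_closed_Suc_le[OF I down, where k = k] by linarith
qed simp

lemma pmf_random_subset:
  assumes I: "finite I" and T: "T \<subseteq> I" and p: "0 \<le> p" "p \<le> 1"
  shows "pmf (random_subset I p) T = p ^ card T * (1 - p) ^ (card I - card T)"
proof -
  let ?P = "Pi_pmf I False (\<lambda>_. bernoulli_pmf p)"
  have "set_pmf ?P \<subseteq> {f. \<forall>x. x \<notin> I \<longrightarrow> \<not> f x}"
    using set_Pi_pmf_subset'[OF I, of False "\<lambda>_. bernoulli_pmf p"] by (auto simp: PiE_dflt_def)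
  then have "(\<lambda>f. {x \<in> I. f x}) -` {T} \<inter> set_pmf ?P = {\<lambda>x. x \<in> T} \<inter> set_pmf ?P"
    using T by (auto simp: fun_eq_iff)
  then have "measure_pmf.prob ?P ((\<lambda>f. {x \<in> I. f x}) -` {T}) = measure_pmf.prob ?P {\<lambda>x. x \<in> T}"
    by (metis measure_Int_set_pmf)
  then have "pmf (random_subset I p) T = pmf ?P (\<lambda>x. x \<in> T)"
    by (simp add: random_subset_def pmf_map measure_pmf_single)
  also have "\<dots> = (\<Prod>x\<in>I. if x \<in> T then p else 1 - p)"
    using T p by (subst pmf_Pi[OF I]) (auto intro!: prod.cong)
  also have "\<dots> = p ^ card T * (1 - p) ^ (card I - card T)"
  proof -
    have "I \<inter> {x. x \<in> T} = T" "I \<inter> - {x. x \<in> T} = I - T" using T by auto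
    moreover have "card (I - T) = card I - card T"
      using T I by (simp add: card_Diff_subset finite_subset)
    ultimately show ?thesis by (simp add: prod.If_cases[OF I])
  qed
  finally show ?thesis .
qed

text \<open>Conditioned on its cardinality \<open>k\<close>, the Bernoulli subset is uniform among \<open>k\<close>-subsets.\<close>

lemma prob_random_subset:
  assumes I: "finite I" and p: "0 \<le> p" "p \<le> 1"
  shows "measure_pmf.prob (random_subset I p) {T. P T}
       = (\<Sum>k\<le>card I. pmf (binomial_pmf (card I) p) k
            * measure_pmf.prob (pmf_of_set (subsets_of_card I k)) {T. P T})"
proof -
  let ?N = "card I" and ?w = "\<lambda>k. p ^ k * (1 - p) ^ (card I - k)"
  let ?A = "\<lambda>k. {T \<in> subsets_of_card I k. P T}"
  have fin: "finite ({T. P T} \<inter> Pow I)" using I by simp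
  have "set_pmf (random_subset I p) \<subseteq> Pow I" by (auto simp: random_subset_def)
  then have "measure_pmf.prob (random_subset I p) {T. P T}
      = measure_pmf.prob (random_subset I p) ({T. P T} \<inter> Pow I)"
    by (metis measure_Int_set_pmf inf.absorb_iff2 inf_assoc)
  also have "\<dots> = (\<Sum>T\<in>{T. P T} \<inter> Pow I. ?w (card T))"
    using I p by (simp add: measure_measure_pmf_finite[OF fin] pmf_random_subset)
  also have "\<dots> = (\<Sum>k\<le>?N. \<Sum>T\<in>{T \<in> {T. P T} \<inter> Pow I. card T = k}. ?w (card T))"
    using fin I by (intro sum.group[symmetric]) (auto intro: card_mono)
  also have "\<dots> = (\<Sum>k\<le>?N. \<Sum>T\<in>?A k. ?w k)"
    by (intro sum.cong refl) (auto simp: subsets_of_card_def)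
  also have "\<dots> = (\<Sum>k\<le>?N. real (card (?A k)) * ?w k)" by simp
  also have "\<dots> = (\<Sum>k\<le>?N. pmf (binomial_pmf ?N p) k
      * measure_pmf.prob (pmf_of_set (subsets_of_card I k)) {T. P T})"
    using p by (intro sum.cong refl) (simp add: prob_pmf_of_subsets_of_card[OF I] pmf_binomial)
  finally show ?thesis .
qed

lemma prob_random_subset_le_uniform:
  assumes I: "finite I" and down: "down_closed P"
    and p: "0 \<le> p" "p \<le> 1" and m: "m \<le> card I"
  shows "measure_pmf.prob (random_subset I p) {T. P T}
       \<le> measure_pmf.prob (pmf_of_set (subsets_of_card I m)) {T. P T}
         + measure_pmf.prob (binomial_pmf (card I) p) {..m}"
proof -
  let ?N = "card I" and ?b = "pmf (binomial_pmf (card I) p)"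
  let ?u = "\<lambda>k. measure_pmf.prob (pmf_of_set (subsets_of_card I k)) {T. P T}"
  have "?u k \<le> of_bool (k \<le> m) + ?u m" if "k \<le> ?N" for k
    using prob_down_closed_antimono[OF I down, where m = m and k = k] that
    by (cases "k \<le> m") (auto intro: add_increasing2 measure_pmf.prob_le_1)
  then have "(\<Sum>k\<le>?N. ?b k * ?u k) \<le> (\<Sum>k\<le>?N. ?b k * of_bool (k \<le> m) + ?b k * ?u m)"
    by (intro sum_mono) (simp add: distrib_left[symmetric] mult_left_mono)
  also have "\<dots> = (\<Sum>k\<le>m. ?b k) + ?u m * (\<Sum>k\<le>?N. ?b k)"
  proof -
    have "{..?N} \<inter> {k. k \<le> m} = {..m}" using m by auto
    then show ?thesis
      by (simp add: sum.distrib sum_distrib_left mult.commute sum.inter_filter[symmetric])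
  qed
  also have "(\<Sum>k\<le>?N. ?b k) = 1"
    using p by (intro sum_pmf_eq_1) (auto simp: set_pmf_binomial_eq split: if_splits)
  also have "(\<Sum>k\<le>m. ?b k) = measure_pmf.prob (binomial_pmf ?N p) {..m}"
    by (simp add: measure_measure_pmf_finite)
  finally show ?thesis using prob_random_subset[OF I p] by simp
qed

lemma prob_binomial_atMost_le_exp:
  assumes n: "n > 0" and p: "p \<in> {0..1}" and \<epsilon>: "\<epsilon> \<ge> 0" and m: "real m / real n = p - \<epsilon>"
  shows "measure_pmf.prob (binomial_pmf n p) {..m} \<le> exp (- 2 * real n * \<epsilon>\<^sup>2)"
proof -
  have "{..m} = {k. real k / real n \<le> p - \<epsilon>}"
    using n by (auto simp: m[symmetric] divide_le_cancel)
  then show ?thesis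
    using binomial_distribution.prob_le'[of p n \<epsilon>] p n \<epsilon>
    by (simp add: binomial_distribution_def)
qed

theorem lemma1:
  fixes n1 n2 r rG m0 :: nat
    and L G S0 :: "real mat"
    and lam \<epsilon>0 \<rho>0 :: real
  assumes "n1 > 0" and "n2 > 0"
    and "L \<in> carrier_mat n1 n2" and "mrank n1 L = r"
    and "G \<in> carrier_mat n1 rG" and "transpose_mat G * G = 1\<^sub>m rG"
    and "mrank n1 ((1\<^sub>m n1 - G * transpose_mat G) * L) < r"
    and "S0 \<in> carrier_mat n1 n2" and "\<forall>i<n1. \<forall>j<n2. S0 $$ (i,j) \<noteq> 0"
    and "lam > 0"
    and "\<epsilon>0 > 0"
    and "\<rho>0 = real m0 / real (n1 * n2) + \<epsilon>0" and "0 \<le> \<rho>0" and "\<rho>0 \<le> 1"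
  shows "measure_pmf.prob (unif_model n1 n2 m0) {\<Omega>. Success n1 n2 rG lam L G S0 \<Omega>}
         \<ge> measure_pmf.prob (ber_model n1 n2 \<rho>0) {\<Omega>. Success n1 n2 rG lam L G S0 \<Omega>}
           - exp (- 2 * real (n1 * n2) * \<epsilon>0 ^ 2)"
proof -
  let ?I = "idx_set n1 n2" and ?N = "n1 * n2" and ?P = "Success n1 n2 rG lam L G S0"
  have I: "finite ?I" "card ?I = ?N" by (simp_all add: idx_set_def card_cartesian_product)
  have N: "?N > 0" using assms(1,2) by simp
  have down: "down_closed ?P"
    using Success_antimono[OF assms(3,5,8)] assms(10) unfolding down_closed_def by auto
  have "real m0 / real ?N < 1" using assms(11,12,14) by linarith
  then have "real m0 < real ?N" using N by (simp add: divide_simps del: of_nat_mult)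
  then have m0: "m0 \<le> ?N" by (simp del: of_nat_mult)
  have "measure_pmf.prob (ber_model n1 n2 \<rho>0) {\<Omega>. ?P \<Omega>}
      \<le> measure_pmf.prob (unif_model n1 n2 m0) {\<Omega>. ?P \<Omega>}
        + measure_pmf.prob (binomial_pmf ?N \<rho>0) {..m0}"
    using prob_random_subset_le_uniform[OF I(1) down assms(13,14)] m0 I(2)
    by (simp add: ber_model_def unif_model_def random_subset_def subsets_of_card_def)
  moreover have "measure_pmf.prob (binomial_pmf ?N \<rho>0) {..m0} \<le> exp (- 2 * real ?N * \<epsilon>0 ^ 2)"
    using prob_binomial_atMost_le_exp[OF N] assms(11-14) by simp
  ultimately show ?thesis by linarith
qed

end
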